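(* Let $d\ge2$, let $a$ be an i.i.d. conductivity function on $\mathbb{Z}^d$, $\xi\in\mathbb{R}^d$ with $|\xi|=1$, and let $\phi_T$ be the associated approximate corrector, $T>0$. Then for all $n\in2\mathbb{N}$, \[ \big\langle|\phi_T(0)|^n\big(|\nabla\phi_T(0)|^2+|\nabla^*\phi_T(0)|^2\big)\big\rangle\lesssim\langle|\phi_T(0)|^n\rangle, \] where the multiplicative constant depends on $n$, $\alpha$, $\beta$, $d$, but not on $T>0$.
   Context: A conductivity function on $\mathbb{Z}^d$ is $a:\mathbb{Z}^d\times\mathbb{Z}^d\to\mathbb{R}^+$ with $a(x,y)=0$ if $|x-y|\ne1$ and $a(x,y)=a(y,x)\in[\alpha,\beta]$ if $|x-y|=1$, $0<\alpha\le\beta$; i.i.d. means its edge values are independent identically distributed random variables; $\langle\cdot\rangle$ is expectation. With $e_1,\dots,e_d$ the canonical basis: $\nabla u(x)=(u(x+e_i)-u(x))_i$, $\nabla^*u(x)=(u(x)-u(x-e_i))_i$, $\nabla^*\cdot g=\sum_i\nabla_i^*g_i$, $A(x)=\operatorname{diag}(a(x,x+e_1),\dots,a(x,x+e_d))$. The approximate corrector $\phi_T$ is the unique stationary random function with $T^{-1}\phi_T-\nabla^*\cdot A(\nabla\phi_T+\xi)=0$ in $\mathbb{Z}^d$ and $\langle\phi_T\rangle=0$. $X\lesssim Y$ means $X\le CY$ with a constant $C$. *)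

theory Defs
  imports "HOL-Probability.Probability"
begin

text \<open>Lattice Z^d is represented as int^'d (dimension d = CARD('d)).
  An edge {x, x+e_i} is represented by the pair (x, i).
  An environment (sample point) is a function from edges to conductivity values;
  a(x, x+e_i) = omega (x, i).\<close>

definition unit_vec :: "'d::finite \<Rightarrow> int^'d" where
  "unit_vec i = (\<chi> j. if j = i then 1 else 0)"

definition grad :: "(int^'d::finite \<Rightarrow> real) \<Rightarrow> int^'d \<Rightarrow> real^'d" where
  "grad u x = (\<chi> i. u (x + unit_vec i) - u x)"

definition grad_star :: "(int^'d::finite \<Rightarrow> real) \<Rightarrow> int^'d \<Rightarrow> real^'d" where
  "grad_star u x = (\<chi> i. u x - u (x - unit_vec i))"

definition div_star :: "(int^'d::finite \<Rightarrow> real^'d) \<Rightarrow> int^'d \<Rightarrow> real" where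
  "div_star g x = (\<Sum>i\<in>UNIV. g x $ i - g (x - unit_vec i) $ i)"

text \<open>A(x) = diag(a(x,x+e_1),...,a(x,x+e_d)), applied to the vector v.\<close>
definition cond_apply :: "(((int^'d::finite) \<times> 'd) \<Rightarrow> real) \<Rightarrow> int^'d \<Rightarrow> real^'d \<Rightarrow> real^'d" where
  "cond_apply \<omega> x v = (\<chi> i. \<omega> (x, i) * v $ i)"

definition conductivity_law :: "real \<Rightarrow> real \<Rightarrow> real measure \<Rightarrow> bool" where
  "conductivity_law \<alpha> \<beta> \<mu> \<longleftrightarrow>
     prob_space \<mu> \<and> sets \<mu> = sets borel \<and> (AE t in \<mu>. \<alpha> \<le> t \<and> t \<le> \<beta>)"

text \<open>Canonical probability space of an i.i.d. conductivity function:
  infinite product of the single-edge law over all edges.\<close>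
definition env_measure :: "real measure \<Rightarrow> (((int^'d::finite) \<times> 'd) \<Rightarrow> real) measure" where
  "env_measure \<mu> = PiM UNIV (\<lambda>_. \<mu>)"

definition shift :: "int^'d::finite \<Rightarrow> (((int^'d) \<times> 'd) \<Rightarrow> real) \<Rightarrow> (((int^'d) \<times> 'd) \<Rightarrow> real)" where
  "shift z \<omega> = (\<lambda>(x, i). \<omega> (x + z, i))"

text \<open>Such a function exists and is unique (up to null sets).\<close>
definition approx_corrector ::
  "real measure \<Rightarrow> real^'d::finite \<Rightarrow> real \<Rightarrow> ((((int^'d) \<times> 'd) \<Rightarrow> real) \<Rightarrow> int^'d \<Rightarrow> real) \<Rightarrow> bool" where
  "approx_corrector \<mu> \<xi> T \<phi> \<longleftrightarrow>
     (\<forall>x. (\<lambda>\<omega>. \<phi> \<omega> x) \<in> borel_measurable (env_measure \<mu>)) \<and>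
     (\<forall>\<omega> x. \<phi> \<omega> x = \<phi> (shift x \<omega>) 0) \<and>
     (\<exists>K. \<forall>\<omega> x. \<bar>\<phi> \<omega> x\<bar> \<le> K) \<and>
     (AE \<omega> in env_measure \<mu>. \<forall>x.
        \<phi> \<omega> x / T - div_star (\<lambda>y. cond_apply \<omega> y (grad (\<phi> \<omega>) y + \<xi>)) x = 0) \<and>
     (\<integral>\<omega>. \<phi> \<omega> 0 \<partial>env_measure \<mu>) = 0"

end

theory Submission
  imports Defs
begin

text \<open>Test the corrector equation at the origin with \<open>\<phi>(0)\<^sup>n\<^sup>+\<^sup>1\<close> and take expectations.
  Stationarity turns the backward differences of \<open>\<nabla>\<^sup>*\<cdot>A(\<nabla>\<phi> + \<xi>)\<close> into forward ones, so
  \<open>\<Sum>\<^sub>i \<langle>a(0,e\<^sub>i)(\<nabla>\<^sub>i\<phi>(0) + \<xi>\<^sub>i)(\<phi>(e\<^sub>i)\<^sup>n\<^sup>+\<^sup>1 - \<phi>(0)\<^sup>n\<^sup>+\<^sup>1)\<rangle> = -\<langle>\<phi>(0)\<^sup>n\<^sup>+\<^sup>2\<rangle>/T \<le> 0\<close>.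
  For even \<open>n\<close> the map \<open>s \<mapsto> s\<^sup>n\<^sup>+\<^sup>1\<close> is coercive,
  \<open>(s\<^sup>n\<^sup>+\<^sup>1 - t\<^sup>n\<^sup>+\<^sup>1)(s - t) \<ge> \<onehalf>(|s|\<^sup>n + |t|\<^sup>n)(s - t)\<^sup>2\<close>, and Lipschitz with weight
  \<open>(n+1)(|s|\<^sup>n + |t|\<^sup>n)\<close>; with Young's inequality for the \<open>\<xi>\<close>-term this bounds
  \<open>\<langle>(|\<phi>(e\<^sub>i)|\<^sup>n + |\<phi>(0)|\<^sup>n)(\<nabla>\<^sub>i\<phi>(0))\<^sup>2\<rangle>\<close> by a multiple of \<open>\<langle>|\<phi>(0)|\<^sup>n\<rangle>\<close>.
  Stationarity once more identifies the sum of these edge energies with the left-hand side.\<close>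

lemma power_diff_mult_diff_ge:
  fixes s t :: real
  assumes "even n"
  shows "(\<bar>s\<bar>^n + \<bar>t\<bar>^n) * (s - t)^2 \<le> 2 * ((s^(n+1) - t^(n+1)) * (s - t))"
proof -
  obtain m where m: "n = 2 * m" using assms by blast
  have "0 \<le> (s^2 - t^2) * ((s^2)^m - (t^2)^m)"
  proof (cases "t^2 \<le> s^2")
    case True
    then show ?thesis by (simp add: power_mono)
  next
    case False
    then have "(s^2)^m \<le> (t^2)^m" by (simp add: power_mono)
    with False show ?thesis by (intro mult_nonpos_nonpos) auto
  qed
  then have "0 \<le> (s^2 - t^2) * (s^n - t^n)"
    by (simp add: m power_mult)
  moreover have "2 * ((s^(n+1) - t^(n+1)) * (s - t)) = (s^n + t^n) * (s - t)^2 + (s^2 - t^2) * (s^n - t^n)"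
    by (simp add: power2_eq_square algebra_simps)
  ultimately show ?thesis
    by (simp add: power_even_abs assms)
qed

lemma abs_power_diff_le:
  fixes s t :: real
  shows "\<bar>s^(n+1) - t^(n+1)\<bar> \<le> (real n + 1) * (\<bar>s\<bar>^n + \<bar>t\<bar>^n) * \<bar>s - t\<bar>"
proof -
  have term_le: "\<bar>s^p * t^(n-p)\<bar> \<le> \<bar>s\<bar>^n + \<bar>t\<bar>^n" if "p \<le> n" for p
  proof -
    have "\<bar>s^p * t^(n-p)\<bar> \<le> max \<bar>s\<bar> \<bar>t\<bar> ^ p * max \<bar>s\<bar> \<bar>t\<bar> ^ (n-p)"
      by (simp add: abs_mult power_abs mult_mono power_mono)
    also have "\<dots> = max \<bar>s\<bar> \<bar>t\<bar> ^ n"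
      using that by (simp flip: power_add)
    also have "\<dots> \<le> \<bar>s\<bar>^n + \<bar>t\<bar>^n"
      by (simp add: max_def)
    finally show ?thesis .
  qed
  have "\<bar>\<Sum>p<Suc n. s^p * t^(n-p)\<bar> \<le> (\<Sum>p<Suc n. \<bar>s\<bar>^n + \<bar>t\<bar>^n)"
    using term_le by (intro order_trans[OF sum_abs sum_mono]) auto
  then have sum_le: "\<bar>\<Sum>p<Suc n. s^p * t^(n-p)\<bar> \<le> (real n + 1) * (\<bar>s\<bar>^n + \<bar>t\<bar>^n)"
    by (simp add: ac_simps)
  have "\<bar>s^(n+1) - t^(n+1)\<bar> = \<bar>s - t\<bar> * \<bar>\<Sum>p<Suc n. s^p * t^(n-p)\<bar>"
    using diff_power_eq_sum[of s n t] by (simp add: abs_mult)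
  also have "\<dots> \<le> \<bar>s - t\<bar> * ((real n + 1) * (\<bar>s\<bar>^n + \<bar>t\<bar>^n))"
    using sum_le by (rule mult_left_mono) simp
  finally show ?thesis
    by (simp add: ac_simps)
qed

lemma tested_flux_lower_bound:
  fixes \<alpha> \<beta> a x s t :: real
  assumes "even n" and "0 < \<alpha>" and "\<alpha> \<le> a" and "a \<le> \<beta>" and "\<bar>x\<bar> \<le> 1"
  shows "\<alpha>/4 * ((\<bar>s\<bar>^n + \<bar>t\<bar>^n) * (s - t)^2) - ((real n + 1) * \<beta>)^2/\<alpha> * (\<bar>s\<bar>^n + \<bar>t\<bar>^n)
           \<le> a * (s - t + x) * (s^(n+1) - t^(n+1))"
proof -
  define M where "M = \<bar>s\<bar>^n + \<bar>t\<bar>^n"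
  define D where "D = s - t"
  define \<Psi> where "\<Psi> = s^(n+1) - t^(n+1)"
  define k where "k = (real n + 1) * \<beta>"
  have M_nonneg: "0 \<le> M" by (simp add: M_def)
  have coercive: "M * D^2 \<le> 2 * (\<Psi> * D)"
    using power_diff_mult_diff_ge[OF assms(1), of s t] by (simp add: M_def D_def \<Psi>_def)
  moreover have "0 \<le> M * D^2" using M_nonneg by simp
  ultimately have "0 \<le> \<Psi> * D" by linarith
  then have "\<alpha> * (\<Psi> * D) \<le> a * (\<Psi> * D)" by (rule mult_right_mono[OF assms(3)])
  moreover have "\<alpha>/2 * (M * D^2) \<le> \<alpha> * (\<Psi> * D)" using coercive assms(2) by simp
  ultimately have main: "\<alpha>/2 * (M * D^2) \<le> a * (\<Psi> * D)" by linarith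
  have "\<bar>a * x * \<Psi>\<bar> \<le> \<beta> * 1 * ((real n + 1) * M * \<bar>D\<bar>)"
    unfolding abs_mult using assms(2-5) abs_power_diff_le[of s n t]
    by (intro mult_mono) (auto simp: M_def D_def \<Psi>_def)
  then have drift: "- (M * (k * \<bar>D\<bar>)) \<le> a * x * \<Psi>"
    by (simp add: k_def algebra_simps)
  have "k * \<bar>D\<bar> \<le> \<alpha>/4 * D^2 + k^2/\<alpha>"
  proof -
    have "0 \<le> (\<alpha> * \<bar>D\<bar>/2 - k)^2" by simp
    then have "\<alpha> * (k * \<bar>D\<bar>) \<le> \<alpha> * (\<alpha>/4 * D^2 + k^2/\<alpha>)"
      using assms(2) by (simp add: power2_eq_square algebra_simps)
    then show ?thesis using assms(2) by simp
  qed
  then have "M * (k * \<bar>D\<bar>) \<le> M * (\<alpha>/4 * D^2 + k^2/\<alpha>)"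
    by (rule mult_left_mono[OF _ M_nonneg])
  then have "M * (k * \<bar>D\<bar>) \<le> \<alpha>/4 * (M * D^2) + k^2/\<alpha> * M"
    by (simp add: algebra_simps)
  moreover have "a * (D + x) * \<Psi> = a * (\<Psi> * D) + a * x * \<Psi>"
    by (simp add: algebra_simps)
  ultimately have "\<alpha>/4 * (M * D^2) - k^2/\<alpha> * M \<le> a * (D + x) * \<Psi>"
    using main drift by linarith
  then show ?thesis
    unfolding M_def D_def \<Psi>_def k_def .
qed

named_theorems ae_bounded_intros

text \<open>The conductivities are bounded only almost surely, so integrability of the polynomial
  expressions in \<open>\<phi>\<close> and \<open>\<omega>\<close> is tracked through essential boundedness.\<close>

definition ae_bounded :: "'a measure \<Rightarrow> ('a \<Rightarrow> real) \<Rightarrow> bool" where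
  "ae_bounded M f \<longleftrightarrow> (\<exists>B. AE x in M. \<bar>f x\<bar> \<le> B)"

lemma ae_bounded_const [ae_bounded_intros]: "ae_bounded M (\<lambda>x. c)"
  unfolding ae_bounded_def by (intro exI[of _ "\<bar>c\<bar>"]) simp

lemma ae_bounded_add [ae_bounded_intros]:
  assumes "ae_bounded M f" and "ae_bounded M g"
  shows "ae_bounded M (\<lambda>x. f x + g x)"
proof -
  obtain B C where "AE x in M. \<bar>f x\<bar> \<le> B" and "AE x in M. \<bar>g x\<bar> \<le> C"
    using assms unfolding ae_bounded_def by blast
  then have "AE x in M. \<bar>f x + g x\<bar> \<le> B + C"
    by eventually_elim linarith
  then show ?thesis unfolding ae_bounded_def by blast
qed

lemma ae_bounded_mult [ae_bounded_intros]:
  assumes "ae_bounded M f" and "ae_bounded M g"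
  shows "ae_bounded M (\<lambda>x. f x * g x)"
proof -
  obtain B C where "AE x in M. \<bar>f x\<bar> \<le> B" and "AE x in M. \<bar>g x\<bar> \<le> C"
    using assms unfolding ae_bounded_def by blast
  then have "AE x in M. \<bar>f x * g x\<bar> \<le> \<bar>B\<bar> * \<bar>C\<bar>"
    by eventually_elim (simp add: abs_mult mult_mono')
  then show ?thesis unfolding ae_bounded_def by blast
qed

lemma ae_bounded_diff [ae_bounded_intros]:
  assumes "ae_bounded M f" and "ae_bounded M g"
  shows "ae_bounded M (\<lambda>x. f x - g x)"
  using ae_bounded_add[OF assms(1) ae_bounded_mult[OF ae_bounded_const[of M "-1"] assms(2)]]
  by simp

lemma ae_bounded_abs [ae_bounded_intros]: "ae_bounded M f \<Longrightarrow> ae_bounded M (\<lambda>x. \<bar>f x\<bar>)"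
  unfolding ae_bounded_def by simp

lemma ae_bounded_power [ae_bounded_intros]: "ae_bounded M f \<Longrightarrow> ae_bounded M (\<lambda>x. f x ^ k)"
proof (induction k)
  case 0
  show ?case using ae_bounded_const[of M 1] by simp
next
  case (Suc k)
  then show ?case using ae_bounded_mult[of M f "\<lambda>x. f x ^ k"] by simp
qed

lemma (in finite_measure) integrable_ae_bounded:
  assumes "ae_bounded M f" and "f \<in> borel_measurable M"
  shows "integrable M f"
proof -
  obtain B where "AE x in M. \<bar>f x\<bar> \<le> B" using assms(1) unfolding ae_bounded_def by blast
  then show ?thesis by (intro integrable_const_bound[OF _ assms(2)]) simp
qed

lemma shift_shift: "shift y (shift z \<omega>) = shift (y + z) \<omega>"
  by (auto simp: shift_def fun_eq_iff add.assoc)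

lemma shift_apply: "shift z \<omega> (x, i) = \<omega> (x + z, i)"
  by (simp add: shift_def)

lemma prob_space_env_measure: "prob_space \<mu> \<Longrightarrow> prob_space (env_measure \<mu>)"
  unfolding env_measure_def by (intro prob_space_PiM) auto

lemma shift_reindex: "shift z = (\<lambda>\<omega>. \<lambda>e\<in>UNIV. \<omega> ((\<lambda>(x, i). (x + z, i)) e))"
  by (auto simp: shift_def fun_eq_iff)

lemma measurable_shift: "shift z \<in> measurable (env_measure \<mu>) (env_measure \<mu>)"
proof -
  have "(\<lambda>\<omega>. \<lambda>e\<in>UNIV. \<omega> ((\<lambda>(x, i). (x + z, i)) e))
    \<in> measurable (PiM UNIV (\<lambda>_. \<mu>)) (PiM UNIV (\<lambda>e. (\<lambda>_. \<mu>) ((\<lambda>(x, i). (x + z, i)) e)))"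
    by measurable
  then show ?thesis by (simp add: env_measure_def shift_reindex)
qed

lemma distr_shift_env_measure:
  assumes "prob_space \<mu>"
  shows "distr (env_measure \<mu>) (env_measure \<mu>) (shift z) = env_measure \<mu>"
proof -
  have "distr (PiM UNIV (\<lambda>_. \<mu>)) (PiM UNIV (\<lambda>e. (\<lambda>_. \<mu>) ((\<lambda>(x, i). (x + z, i)) e)))
      (\<lambda>\<omega>. \<lambda>e\<in>UNIV. \<omega> ((\<lambda>(x, i). (x + z, i)) e))
    = PiM UNIV (\<lambda>e. (\<lambda>_. \<mu>) ((\<lambda>(x, i). (x + z, i)) e))"
    by (rule distr_PiM_reindex) (use assms in \<open>auto simp: inj_on_def\<close>)
  then show ?thesis by (simp add: env_measure_def shift_reindex)
qed

lemma integral_shift_env_measure: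
  assumes "prob_space \<mu>" and "g \<in> borel_measurable (env_measure \<mu>)"
  shows "(\<integral>\<omega>. g (shift z \<omega>) \<partial>env_measure \<mu>) = (\<integral>\<omega>. (g \<omega> :: real) \<partial>env_measure \<mu>)"
  using integral_distr[OF measurable_shift assms(2), of z] distr_shift_env_measure[OF assms(1), of z]
  by simp

lemma measurable_env_component:
  assumes "sets \<mu> = sets borel"
  shows "(\<lambda>\<omega>. \<omega> k) \<in> borel_measurable (env_measure \<mu>)"
proof -
  have "(\<lambda>\<omega>. \<omega> k) \<in> PiM UNIV (\<lambda>_. \<mu>) \<rightarrow>\<^sub>M \<mu>"
    by (rule measurable_component_singleton) simp
  then show ?thesis
    by (simp add: env_measure_def measurable_cong_sets[OF refl assms])
qed

lemma AE_env_component_bounds: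
  "conductivity_law \<alpha> \<beta> \<mu> \<Longrightarrow> AE \<omega> in env_measure \<mu>. \<alpha> \<le> \<omega> k \<and> \<omega> k \<le> \<beta>"
  unfolding env_measure_def conductivity_law_def by (intro AE_PiM_component) auto

locale corrector_setting =
  fixes \<alpha> \<beta> :: real and \<mu> :: "real measure" and \<xi> :: "real^'d::finite" and T :: real
    and \<phi> :: "(((int^'d) \<times> 'd) \<Rightarrow> real) \<Rightarrow> int^'d \<Rightarrow> real"
  assumes law: "conductivity_law \<alpha> \<beta> \<mu>" and \<alpha>_pos: "0 < \<alpha>" and norm_\<xi>: "norm \<xi> = 1"
    and T_pos: "0 < T" and corrector: "approx_corrector \<mu> \<xi> T \<phi>"
begin

abbreviation Env :: "(((int^'d) \<times> 'd) \<Rightarrow> real) measure" where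
  "Env \<equiv> env_measure \<mu>"

sublocale prob_space Env
  using law by (intro prob_space_env_measure) (simp add: conductivity_law_def)

lemma measurable_phi [measurable]: "(\<lambda>\<omega>. \<phi> \<omega> x) \<in> borel_measurable Env"
  using corrector by (simp add: approx_corrector_def)

lemma measurable_component [measurable]: "(\<lambda>\<omega>. \<omega> k) \<in> borel_measurable Env"
  using law by (intro measurable_env_component) (simp add: conductivity_law_def)

lemma measurable_shift_Env [measurable]: "shift z \<in> Env \<rightarrow>\<^sub>M Env"
  by (rule measurable_shift)

lemma phi_shift: "\<phi> (shift z \<omega>) y = \<phi> \<omega> (y + z)"
proof -
  have stationary: "\<And>\<omega> x. \<phi> \<omega> x = \<phi> (shift x \<omega>) 0"
    using corrector by (simp add: approx_corrector_def)
  show ?thesis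
    by (simp add: stationary[of "shift z \<omega>"] stationary[of \<omega>] shift_shift)
qed

lemma integral_shift:
  fixes g :: "_ \<Rightarrow> real"
  assumes "g \<in> borel_measurable Env"
  shows "(\<integral>\<omega>. g (shift z \<omega>) \<partial>Env) = (\<integral>\<omega>. g \<omega> \<partial>Env)"
  using law assms by (intro integral_shift_env_measure) (simp_all add: conductivity_law_def)

lemma ae_bounded_phi [ae_bounded_intros]: "ae_bounded Env (\<lambda>\<omega>. \<phi> \<omega> x)"
proof -
  obtain K where "\<And>\<omega> x. \<bar>\<phi> \<omega> x\<bar> \<le> K"
    using corrector unfolding approx_corrector_def by blast
  then show ?thesis unfolding ae_bounded_def by (intro exI[of _ K] AE_I2)
qed

lemma ae_bounded_component [ae_bounded_intros]: "ae_bounded Env (\<lambda>\<omega>. \<omega> k)"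
proof -
  have "AE \<omega> in Env. \<bar>\<omega> k\<bar> \<le> \<beta>"
    using AE_env_component_bounds[OF law, of k] by eventually_elim (use \<alpha>_pos in auto)
  then show ?thesis unfolding ae_bounded_def by blast
qed

lemma integral_phi_translate:
  fixes f :: "real \<Rightarrow> real"
  assumes [measurable]: "f \<in> borel_measurable borel"
  shows "(\<integral>\<omega>. f (\<phi> \<omega> z) \<partial>Env) = (\<integral>\<omega>. f (\<phi> \<omega> 0) \<partial>Env)"
  using integral_shift[of "\<lambda>\<omega>. f (\<phi> \<omega> 0)" z] by (simp add: phi_shift)

lemma energy_eq_edge_sum:
  "(\<integral>\<omega>. \<bar>\<phi> \<omega> 0\<bar>^n * ((norm (grad (\<phi> \<omega>) 0))\<^sup>2 + (norm (grad_star (\<phi> \<omega>) 0))\<^sup>2) \<partial>Env)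
    = (\<Sum>i\<in>UNIV. \<integral>\<omega>. (\<bar>\<phi> \<omega> (unit_vec i)\<bar>^n + \<bar>\<phi> \<omega> 0\<bar>^n) * (\<phi> \<omega> (unit_vec i) - \<phi> \<omega> 0)^2 \<partial>Env)"
proof -
  have norm_sq: "(norm v)\<^sup>2 = (\<Sum>i\<in>UNIV. (v $ i)\<^sup>2)" for v :: "real^'d"
    by (simp add: norm_vec_def L2_set_def sum_nonneg)
  have integrable: "integrable Env (\<lambda>\<omega>. \<bar>\<phi> \<omega> x\<bar>^n * (\<phi> \<omega> y - \<phi> \<omega> z)^2)" for x y z
    by (intro integrable_ae_bounded ae_bounded_intros) measurable
  have backward: "(\<integral>\<omega>. \<bar>\<phi> \<omega> 0\<bar>^n * (\<phi> \<omega> 0 - \<phi> \<omega> (- unit_vec i))^2 \<partial>Env)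
      = (\<integral>\<omega>. \<bar>\<phi> \<omega> (unit_vec i)\<bar>^n * (\<phi> \<omega> (unit_vec i) - \<phi> \<omega> 0)^2 \<partial>Env)" for i
    using integral_shift[of "\<lambda>\<omega>. \<bar>\<phi> \<omega> (unit_vec i)\<bar>^n * (\<phi> \<omega> (unit_vec i) - \<phi> \<omega> 0)^2" "- unit_vec i"]
    by (simp add: phi_shift)
  have "(\<integral>\<omega>. \<bar>\<phi> \<omega> 0\<bar>^n * ((norm (grad (\<phi> \<omega>) 0))\<^sup>2 + (norm (grad_star (\<phi> \<omega>) 0))\<^sup>2) \<partial>Env)
      = (\<integral>\<omega>. (\<Sum>i\<in>UNIV. \<bar>\<phi> \<omega> 0\<bar>^n * (\<phi> \<omega> (unit_vec i) - \<phi> \<omega> 0)^2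
          + \<bar>\<phi> \<omega> 0\<bar>^n * (\<phi> \<omega> 0 - \<phi> \<omega> (- unit_vec i))^2) \<partial>Env)"
    by (simp add: norm_sq grad_def grad_star_def sum_distrib_left sum.distrib distrib_left)
  also have "\<dots> = (\<Sum>i\<in>UNIV. (\<integral>\<omega>. \<bar>\<phi> \<omega> 0\<bar>^n * (\<phi> \<omega> (unit_vec i) - \<phi> \<omega> 0)^2 \<partial>Env)
      + (\<integral>\<omega>. \<bar>\<phi> \<omega> 0\<bar>^n * (\<phi> \<omega> 0 - \<phi> \<omega> (- unit_vec i))^2 \<partial>Env))"
    using integrable by (simp add: integral_sum integral_add)
  also have "\<dots> = (\<Sum>i\<in>UNIV. \<integral>\<omega>. (\<bar>\<phi> \<omega> (unit_vec i)\<bar>^n + \<bar>\<phi> \<omega> 0\<bar>^n) * (\<phi> \<omega> (unit_vec i) - \<phi> \<omega> 0)^2 \<partial>Env)"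
    using integrable by (simp add: backward distrib_right integral_add add.commute)
  finally show ?thesis .
qed

definition flux :: "'d \<Rightarrow> (((int^'d) \<times> 'd) \<Rightarrow> real) \<Rightarrow> real" where
  "flux i \<omega> = \<omega> (0, i) * (\<phi> \<omega> (unit_vec i) - \<phi> \<omega> 0 + \<xi> $ i)"

lemma measurable_flux [measurable]: "flux i \<in> borel_measurable Env"
  unfolding flux_def[abs_def] by measurable

lemma ae_bounded_flux [ae_bounded_intros]: "ae_bounded Env (flux i)"
  unfolding flux_def[abs_def] by (intro ae_bounded_intros)

lemma div_star_eq_flux_sum:
  "div_star (\<lambda>y. cond_apply \<omega> y (grad (\<phi> \<omega>) y + \<xi>)) 0
    = (\<Sum>i\<in>UNIV. flux i \<omega> - flux i (shift (- unit_vec i) \<omega>))"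
  by (simp add: div_star_def cond_apply_def grad_def flux_def phi_shift shift_apply)

lemma AE_corrector_equation_at_origin:
  "AE \<omega> in Env. \<phi> \<omega> 0 / T = (\<Sum>i\<in>UNIV. flux i \<omega> - flux i (shift (- unit_vec i) \<omega>))"
proof -
  have "AE \<omega> in Env. \<forall>x. \<phi> \<omega> x / T - div_star (\<lambda>y. cond_apply \<omega> y (grad (\<phi> \<omega>) y + \<xi>)) x = 0"
    using corrector unfolding approx_corrector_def by blast
  then show ?thesis
    by eventually_elim (metis div_star_eq_flux_sum eq_iff_diff_eq_0)
qed

lemma integral_flux_shift:
  "(\<integral>\<omega>. flux i (shift (- unit_vec i) \<omega>) * \<phi> \<omega> 0^k \<partial>Env)
    = (\<integral>\<omega>. flux i \<omega> * \<phi> \<omega> (unit_vec i)^k \<partial>Env)"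
  using integral_shift[of "\<lambda>\<omega>. flux i \<omega> * \<phi> \<omega> (unit_vec i)^k" "- unit_vec i"]
  by (simp add: phi_shift)

lemma tested_equation:
  "(\<Sum>i\<in>UNIV. \<integral>\<omega>. flux i \<omega> * (\<phi> \<omega> (unit_vec i)^(n+1) - \<phi> \<omega> 0^(n+1)) \<partial>Env)
    = - (\<integral>\<omega>. \<phi> \<omega> 0^(n+2) \<partial>Env) / T"
proof -
  have integrable: "integrable Env (\<lambda>\<omega>. flux i \<omega> * \<phi> \<omega> x^(n+1))" for i x
    by (intro integrable_ae_bounded ae_bounded_intros) measurable
  have integrable_shifted: "integrable Env (\<lambda>\<omega>. flux i (shift (- unit_vec i) \<omega>) * \<phi> \<omega> 0^(n+1))" for i
    unfolding flux_def by (simp add: phi_shift shift_apply) (intro integrable_ae_bounded ae_bounded_intros, measurable)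
  have "AE \<omega> in Env. \<phi> \<omega> 0^(n+2) / T
      = (\<Sum>i\<in>UNIV. flux i \<omega> * \<phi> \<omega> 0^(n+1) - flux i (shift (- unit_vec i) \<omega>) * \<phi> \<omega> 0^(n+1))"
    using AE_corrector_equation_at_origin
  proof eventually_elim
    case (elim \<omega>)
    have "\<phi> \<omega> 0^(n+2) / T = \<phi> \<omega> 0 / T * \<phi> \<omega> 0^(n+1)"
      by (simp add: power_Suc)
    also have "\<dots> = (\<Sum>i\<in>UNIV. flux i \<omega> - flux i (shift (- unit_vec i) \<omega>)) * \<phi> \<omega> 0^(n+1)"
      using elim by simp
    finally show ?case
      by (simp add: sum_distrib_right left_diff_distrib)
  qed
  then have "(\<integral>\<omega>. \<phi> \<omega> 0^(n+2) / T \<partial>Env) = (\<integral>\<omega>. (\<Sum>i\<in>UNIV. flux i \<omega> * \<phi> \<omega> 0^(n+1)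
      - flux i (shift (- unit_vec i) \<omega>) * \<phi> \<omega> 0^(n+1)) \<partial>Env)"
    by (rule integral_cong_AE[rotated 2]) measurable
  also have "\<dots> = (\<Sum>i\<in>UNIV. (\<integral>\<omega>. flux i \<omega> * \<phi> \<omega> 0^(n+1) \<partial>Env)
      - (\<integral>\<omega>. flux i (shift (- unit_vec i) \<omega>) * \<phi> \<omega> 0^(n+1) \<partial>Env))"
    using integrable integrable_shifted by (simp add: integral_diff)
  also have "\<dots> = (\<Sum>i\<in>UNIV. (\<integral>\<omega>. flux i \<omega> * \<phi> \<omega> 0^(n+1) \<partial>Env)
      - (\<integral>\<omega>. flux i \<omega> * \<phi> \<omega> (unit_vec i)^(n+1) \<partial>Env))"
    by (simp only: integral_flux_shift)
  also have "\<dots> = - (\<Sum>i\<in>UNIV. \<integral>\<omega>. flux i \<omega> * (\<phi> \<omega> (unit_vec i)^(n+1) - \<phi> \<omega> 0^(n+1)) \<partial>Env)"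
    using integrable by (simp add: right_diff_distrib integral_diff sum_subtractf)
  finally show ?thesis
    by simp
qed

lemma tested_flux_sum_nonpos:
  assumes "even n"
  shows "(\<Sum>i\<in>UNIV. \<integral>\<omega>. flux i \<omega> * (\<phi> \<omega> (unit_vec i)^(n+1) - \<phi> \<omega> 0^(n+1)) \<partial>Env) \<le> 0"
proof -
  have "0 \<le> (\<integral>\<omega>. \<phi> \<omega> 0^(n+2) \<partial>Env)"
    by (intro integral_nonneg_AE AE_I2 zero_le_even_power) (use assms in simp)
  then show ?thesis
    unfolding tested_equation by (intro divide_nonpos_pos) (use T_pos in auto)
qed

lemma edge_energy_le_tested_flux:
  assumes "even n"
  shows "\<alpha>/4 * (\<integral>\<omega>. (\<bar>\<phi> \<omega> (unit_vec i)\<bar>^n + \<bar>\<phi> \<omega> 0\<bar>^n) * (\<phi> \<omega> (unit_vec i) - \<phi> \<omega> 0)^2 \<partial>Env)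
      - 2 * ((real n + 1) * \<beta>)^2/\<alpha> * (\<integral>\<omega>. \<bar>\<phi> \<omega> 0\<bar>^n \<partial>Env)
    \<le> (\<integral>\<omega>. flux i \<omega> * (\<phi> \<omega> (unit_vec i)^(n+1) - \<phi> \<omega> 0^(n+1)) \<partial>Env)"
proof -
  define M where "M \<omega> = \<bar>\<phi> \<omega> (unit_vec i)\<bar>^n + \<bar>\<phi> \<omega> 0\<bar>^n" for \<omega>
  define c where "c = ((real n + 1) * \<beta>)^2/\<alpha>"
  have [measurable]: "M \<in> borel_measurable Env"
    unfolding M_def[abs_def] by measurable
  have integrable_M: "integrable Env M"
    unfolding M_def[abs_def] by (intro integrable_ae_bounded ae_bounded_intros) measurable
  have integrable_energy: "integrable Env (\<lambda>\<omega>. M \<omega> * (\<phi> \<omega> (unit_vec i) - \<phi> \<omega> 0)^2)"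
    unfolding M_def[abs_def] by (intro integrable_ae_bounded ae_bounded_intros) measurable
  have integrable_flux: "integrable Env (\<lambda>\<omega>. flux i \<omega> * (\<phi> \<omega> (unit_vec i)^(n+1) - \<phi> \<omega> 0^(n+1)))"
    by (intro integrable_ae_bounded ae_bounded_intros) measurable
  have \<xi>_bound: "\<bar>\<xi> $ i\<bar> \<le> 1"
    using component_le_norm_cart[of \<xi> i] norm_\<xi> by simp
  have "AE \<omega> in Env. \<alpha>/4 * (M \<omega> * (\<phi> \<omega> (unit_vec i) - \<phi> \<omega> 0)^2) - c * M \<omega>
      \<le> flux i \<omega> * (\<phi> \<omega> (unit_vec i)^(n+1) - \<phi> \<omega> 0^(n+1))"
    using AE_env_component_bounds[OF law, of "(0, i)"]
  proof eventually_elim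
    case (elim \<omega>)
    then show ?case
      using tested_flux_lower_bound[OF assms \<alpha>_pos _ _ \<xi>_bound,
          where a = "\<omega> (0, i)" and s = "\<phi> \<omega> (unit_vec i)" and t = "\<phi> \<omega> 0"]
      by (simp add: M_def c_def flux_def)
  qed
  then have "(\<integral>\<omega>. \<alpha>/4 * (M \<omega> * (\<phi> \<omega> (unit_vec i) - \<phi> \<omega> 0)^2) - c * M \<omega> \<partial>Env)
      \<le> (\<integral>\<omega>. flux i \<omega> * (\<phi> \<omega> (unit_vec i)^(n+1) - \<phi> \<omega> 0^(n+1)) \<partial>Env)"
    using integrable_M integrable_energy integrable_flux by (intro integral_mono_AE) auto
  moreover have "(\<integral>\<omega>. \<alpha>/4 * (M \<omega> * (\<phi> \<omega> (unit_vec i) - \<phi> \<omega> 0)^2) - c * M \<omega> \<partial>Env)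
      = \<alpha>/4 * (\<integral>\<omega>. M \<omega> * (\<phi> \<omega> (unit_vec i) - \<phi> \<omega> 0)^2 \<partial>Env) - c * (\<integral>\<omega>. M \<omega> \<partial>Env)"
    using integrable_M integrable_energy by (simp add: integral_diff)
  moreover have "(\<integral>\<omega>. M \<omega> \<partial>Env) = 2 * (\<integral>\<omega>. \<bar>\<phi> \<omega> 0\<bar>^n \<partial>Env)"
  proof -
    have "(\<integral>\<omega>. \<bar>\<phi> \<omega> (unit_vec i)\<bar>^n \<partial>Env) = (\<integral>\<omega>. \<bar>\<phi> \<omega> 0\<bar>^n \<partial>Env)"
      by (rule integral_phi_translate[of "\<lambda>t. \<bar>t\<bar>^n"]) measurable
    moreover have "integrable Env (\<lambda>\<omega>. \<bar>\<phi> \<omega> x\<bar>^n)" for x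
      by (intro integrable_ae_bounded ae_bounded_intros) measurable
    ultimately show ?thesis
      unfolding M_def by (simp add: integral_add)
  qed
  ultimately have "\<alpha>/4 * (\<integral>\<omega>. M \<omega> * (\<phi> \<omega> (unit_vec i) - \<phi> \<omega> 0)^2 \<partial>Env) - c * (2 * (\<integral>\<omega>. \<bar>\<phi> \<omega> 0\<bar>^n \<partial>Env))
      \<le> (\<integral>\<omega>. flux i \<omega> * (\<phi> \<omega> (unit_vec i)^(n+1) - \<phi> \<omega> 0^(n+1)) \<partial>Env)"
    by simp
  then show ?thesis
    by (simp add: M_def c_def)
qed

lemma weighted_energy_bound:
  assumes "even n"
  shows "(\<integral>\<omega>. \<bar>\<phi> \<omega> 0\<bar>^n * ((norm (grad (\<phi> \<omega>) 0))\<^sup>2 + (norm (grad_star (\<phi> \<omega>) 0))\<^sup>2) \<partial>Env)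
    \<le> 8 * real CARD('d) * (real n + 1)^2 * \<beta>^2 / \<alpha>^2 * (\<integral>\<omega>. \<bar>\<phi> \<omega> 0\<bar>^n \<partial>Env)"
proof -
  define S where "S = (\<Sum>i\<in>UNIV. \<integral>\<omega>. (\<bar>\<phi> \<omega> (unit_vec i)\<bar>^n + \<bar>\<phi> \<omega> 0\<bar>^n)
    * (\<phi> \<omega> (unit_vec i) - \<phi> \<omega> 0)^2 \<partial>Env)"
  define E where "E = (\<integral>\<omega>. \<bar>\<phi> \<omega> 0\<bar>^n \<partial>Env)"
  have "\<alpha>/4 * S - real CARD('d) * (2 * ((real n + 1) * \<beta>)^2/\<alpha> * E)
      \<le> (\<Sum>i\<in>UNIV. \<integral>\<omega>. flux i \<omega> * (\<phi> \<omega> (unit_vec i)^(n+1) - \<phi> \<omega> 0^(n+1)) \<partial>Env)"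
    using sum_mono[OF edge_energy_le_tested_flux[OF assms]]
    by (simp add: S_def E_def sum_subtractf sum_distrib_left)
  also have "\<dots> \<le> 0"
    by (rule tested_flux_sum_nonpos[OF assms])
  finally have "S \<le> 8 * real CARD('d) * (real n + 1)^2 * \<beta>^2 / \<alpha>^2 * E"
    using \<alpha>_pos by (simp add: field_simps power2_eq_square)
  then show ?thesis
    by (simp add: energy_eq_edge_sum S_def E_def)
qed

end

theorem lemma2p7:
  fixes \<alpha> \<beta> :: real and n :: nat
  assumes "CARD('d::finite) \<ge> 2" and "0 < \<alpha>" and "\<alpha> \<le> \<beta>" and "even n"
  shows "\<exists>C::real. \<forall>(\<mu>::real measure) (\<xi>::real^'d) (T::real)
           (\<phi>::(((int^'d) \<times> 'd) \<Rightarrow> real) \<Rightarrow> int^'d \<Rightarrow> real).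
           conductivity_law \<alpha> \<beta> \<mu> \<and> norm \<xi> = 1 \<and> T > 0 \<and> approx_corrector \<mu> \<xi> T \<phi> \<longrightarrow>
           (\<integral>\<omega>. \<bar>\<phi> \<omega> 0\<bar> ^ n * ((norm (grad (\<phi> \<omega>) 0))\<^sup>2 + (norm (grad_star (\<phi> \<omega>) 0))\<^sup>2)
              \<partial>(env_measure \<mu> :: (((int^'d) \<times> 'd) \<Rightarrow> real) measure))
           \<le> C * (\<integral>\<omega>. \<bar>\<phi> \<omega> 0\<bar> ^ n \<partial>(env_measure \<mu> :: (((int^'d) \<times> 'd) \<Rightarrow> real) measure))"
  using corrector_setting.weighted_energy_bound[OF corrector_setting.intro[OF _ assms(2)] assms(4)]
  by (intro exI[of _ "8 * real CARD('d) * (real n + 1)^2 * \<beta>^2 / \<alpha>^2"]) blast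

end
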